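(* Let $A^n, A^{n+1}$ be real $N\times N$ matrices satisfying condition (M), let $D=\mathrm{diag}(d_{11},\dots,d_{NN})$ with $d_{ii}>0$ and $\sum_i d_{ii}a^{n+1}_{ij}\ge0$ for every $j$, and let $B^n(\cdot),B^{n+1}(\cdot)$ be limiter-dependent matrices such that $\sum_i d_{ii}b^{n+1}_{ij}(\alpha)=0$ for all $j$ and all $\alpha$. Let $\sigma\in[0,1]$, $\gamma\in(0,1)$, set $s_j=d_{jj}+\Delta t\,\sigma\sum_i d_{ii}a^{n+1}_{ij}$, and let $\Delta t>0$ satisfy $$\Delta t\,\sigma\,\|DB^{n+1}(\mathbf 1)\|_1\le\gamma\min_j s_j .$$ Then for all $\alpha^n,\alpha^{n+1}\in[0,1]^{N-1}$ and all $y^n,g\in\mathbb R^N$ the matrix $E+\Delta t\,\sigma\left(A^{n+1}-B^{n+1}(\alpha^{n+1})\right)$ is invertible, and the solution $y^{n+1}$ of $$\left[E+\Delta t\,\sigma\left(A^{n+1}-B^{n+1}(\alpha^{n+1})\right)\right]y^{n+1}=\left[E-\Delta t(1-\sigma)\left(A^n-B^n(\alpha^n)\right)\right]y^n+\Delta t\,g$$ satisfies $$\|y^{n+1}\|_1\le M\left(M_1\|y^n\|_1+\Delta t\,\|g\|_1\right),\quad M=\frac{\|D\|_1}{(1-\gamma)\min_j s_j},\quad M_1=\|E-\Delta t(1-\sigma)A^n\|_1+\Delta t(1-\sigma)\|B^n(\mathbf 1)\|_1 .$$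
   Context: $E$ is the $N\times N$ identity. Condition (M) on a real $N\times N$ matrix $A=\{a_{ij}\}$: $a_{ii}\ge 0$ for all $i$ and $a_{ij}\le 0$ for all $i\ne j$. Norms: $\|y\|_1=\sum_i|y_i|$, $\|M\|_1=\max_j\sum_i|m_{ij}|$. A limiter-dependent matrix is a map $\alpha=(\alpha_1,\dots,\alpha_{N-1})\in\mathbb R^{N-1}\mapsto B(\alpha)=\{b_{ij}(\alpha)\}$ ($N\times N$) of the form $b_{ij}(\alpha)=\alpha_{\kappa(i,j)}\beta_{ij}$ for $i\ne j$ and $b_{ii}(\alpha)=-\sum_{j\ne i}b_{ij}(\alpha)$, where $\beta_{ij}\le0$ are fixed numbers and $\kappa(i,j)\in\{1,\dots,N-1\}$ are fixed indices. $\mathbf 1$ is the vector with all entries $1$. *)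

theory Defs
  imports Complex_Main
begin

text \<open>N x N real matrices are represented as functions nat => nat => real,
only indices i, j < N being relevant; vectors as nat => real with indices < N.
Limiter vectors alpha in R^(N-1) are functions nat => real indexed by 1..N-1.\<close>

type_synonym mat = "nat \<Rightarrow> nat \<Rightarrow> real"
type_synonym vec = "nat \<Rightarrow> real"

definition idm :: mat where "idm = (\<lambda>i j. if i = j then 1 else 0)"

definition diagm :: "vec \<Rightarrow> mat" where "diagm d = (\<lambda>i j. if i = j then d i else 0)"

definition madd :: "mat \<Rightarrow> mat \<Rightarrow> mat" where "madd A B = (\<lambda>i j. A i j + B i j)"
definition msub :: "mat \<Rightarrow> mat \<Rightarrow> mat" where "msub A B = (\<lambda>i j. A i j - B i j)"
definition mscale :: "real \<Rightarrow> mat \<Rightarrow> mat" where "mscale c A = (\<lambda>i j. c * A i j)"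

definition mmul :: "nat \<Rightarrow> mat \<Rightarrow> mat \<Rightarrow> mat" where
  "mmul N A B = (\<lambda>i j. \<Sum>k<N. A i k * B k j)"

definition mvec :: "nat \<Rightarrow> mat \<Rightarrow> vec \<Rightarrow> vec" where
  "mvec N A y = (\<lambda>i. \<Sum>k<N. A i k * y k)"

definition invertible_mat :: "nat \<Rightarrow> mat \<Rightarrow> bool" where
  "invertible_mat N A \<longleftrightarrow> (\<exists>C. \<forall>i<N. \<forall>j<N. mmul N A C i j = idm i j \<and> mmul N C A i j = idm i j)"

definition condM :: "nat \<Rightarrow> mat \<Rightarrow> bool" where
  "condM N A \<longleftrightarrow> (\<forall>i<N. A i i \<ge> 0) \<and> (\<forall>i<N. \<forall>j<N. i \<noteq> j \<longrightarrow> A i j \<le> 0)"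

definition vnorm1 :: "nat \<Rightarrow> vec \<Rightarrow> real" where "vnorm1 N y = (\<Sum>i<N. \<bar>y i\<bar>)"

definition mnorm1 :: "nat \<Rightarrow> mat \<Rightarrow> real" where
  "mnorm1 N M = Max ((\<lambda>j. \<Sum>i<N. \<bar>M i j\<bar>) ` {..<N})"

definition limmat :: "nat \<Rightarrow> mat \<Rightarrow> (nat \<Rightarrow> nat \<Rightarrow> nat) \<Rightarrow> vec \<Rightarrow> mat" where
  "limmat N \<beta> \<kappa> \<alpha> = (\<lambda>i j. if i \<noteq> j then \<alpha> (\<kappa> i j) * \<beta> i j
      else - (\<Sum>k\<in>{..<N} - {i}. \<alpha> (\<kappa> i k) * \<beta> i k))"

definition is_limmat_data :: "nat \<Rightarrow> mat \<Rightarrow> (nat \<Rightarrow> nat \<Rightarrow> nat) \<Rightarrow> bool" where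
  "is_limmat_data N \<beta> \<kappa> \<longleftrightarrow> (\<forall>i<N. \<forall>j<N. i \<noteq> j \<longrightarrow> \<beta> i j \<le> 0 \<and> \<kappa> i j \<in> {1..N-1})"

definition ones :: vec where "ones = (\<lambda>_. 1)"

end

theory Submission
  imports "Jordan_Normal_Form.Determinant" Defs
begin

text \<open>Multiplying the implicit matrix \<open>C = E + \<Delta>t \<sigma> (A\<^sup>n\<^sup>+\<^sup>1 - B\<^sup>n\<^sup>+\<^sup>1(\<alpha>))\<close> by \<open>D\<close>
splits it as \<open>K - \<Delta>t \<sigma> D B\<^sup>n\<^sup>+\<^sup>1(\<alpha>)\<close> with \<open>K = D (E + \<Delta>t \<sigma> A\<^sup>n\<^sup>+\<^sup>1)\<close>.
The matrix \<open>K\<close> has nonpositive off-diagonal entries and column sums \<open>s\<^sub>j\<close>, which gives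
\<open>\<parallel>K y\<parallel>\<^sub>1 \<ge> min s\<^sub>j \<parallel>y\<parallel>\<^sub>1\<close>; the limiters only shrink the entries of \<open>B\<close>, so the CFL condition
makes the perturbation at most \<open>\<gamma> min s\<^sub>j \<parallel>y\<parallel>\<^sub>1\<close>. Hence
\<open>(1 - \<gamma>) min s\<^sub>j \<parallel>y\<parallel>\<^sub>1 \<le> \<parallel>D\<parallel>\<^sub>1 \<parallel>C y\<parallel>\<^sub>1\<close>, which yields both the invertibility of \<open>C\<close> and,
combined with the triangle inequality for the explicit part, the stability bound.\<close>

lemma mmul_diagm: "i < N \<Longrightarrow> mmul N (diagm d) B i j = d i * B i j"
  unfolding mmul_def diagm_def by (simp add: if_distrib[of "\<lambda>x. x * _"] cong: if_cong)

lemma mvec_diagm: "i < N \<Longrightarrow> mvec N (diagm d) y i = d i * y i"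
  unfolding mvec_def diagm_def by (simp add: if_distrib[of "\<lambda>x. x * _"] cong: if_cong)

lemma mvec_mmul_diagm: "i < N \<Longrightarrow> mvec N (mmul N (diagm d) M) y i = d i * mvec N M y i"
  unfolding mvec_def by (simp add: mmul_diagm sum_distrib_left mult.assoc)

lemma mvec_madd: "mvec N (madd A B) y i = mvec N A y i + mvec N B y i"
  unfolding mvec_def madd_def by (simp add: sum.distrib algebra_simps)

lemma mvec_msub: "mvec N (msub A B) y i = mvec N A y i - mvec N B y i"
  unfolding mvec_def msub_def by (simp add: sum_subtractf algebra_simps)

lemma mvec_mscale: "mvec N (mscale c A) y i = c * mvec N A y i"
  unfolding mvec_def mscale_def by (simp add: sum_distrib_left algebra_simps)

lemma column_sum_le_mnorm1: "j < N \<Longrightarrow> (\<Sum>i<N. \<bar>M i j\<bar>) \<le> mnorm1 N M"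
  unfolding mnorm1_def by (rule Max_ge) auto

lemma mnorm1_nonneg: "N \<ge> 1 \<Longrightarrow> 0 \<le> mnorm1 N M"
  by (rule order_trans[OF _ column_sum_le_mnorm1[of 0]]) (auto intro: sum_nonneg)

text \<open>For \<open>N = 0\<close> both sides are the same junk value \<open>Max {}\<close>.\<close>
lemma mnorm1_mono:
  assumes "\<forall>i<N. \<forall>j<N. \<bar>M i j\<bar> \<le> \<bar>M' i j\<bar>"
  shows "mnorm1 N M \<le> mnorm1 N M'"
proof (cases "N = 0")
  case False
  have "(\<Sum>i<N. \<bar>M i j\<bar>) \<le> mnorm1 N M'" if "j < N" for j
    using assms that by (intro order_trans[OF sum_mono column_sum_le_mnorm1]) auto
  with False show ?thesis unfolding mnorm1_def[of N M] by (subst Max_le_iff) auto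
qed (simp add: mnorm1_def)

lemma vnorm1_nonneg: "0 \<le> vnorm1 N y"
  unfolding vnorm1_def by (auto intro: sum_nonneg)

lemma vnorm1_cong: "(\<And>i. i < N \<Longrightarrow> u i = v i) \<Longrightarrow> vnorm1 N u = vnorm1 N v"
  unfolding vnorm1_def by (rule sum.cong) auto

lemma vnorm1_add_le: "vnorm1 N (\<lambda>i. u i + v i) \<le> vnorm1 N u + vnorm1 N v"
  unfolding vnorm1_def sum.distrib[symmetric] by (rule sum_mono) (rule abs_triangle_ineq)

lemma vnorm1_scale: "vnorm1 N (\<lambda>i. c * u i) = \<bar>c\<bar> * vnorm1 N u"
  unfolding vnorm1_def by (simp add: abs_mult sum_distrib_left)

lemma vnorm1_eq_0_iff: "vnorm1 N y = 0 \<longleftrightarrow> (\<forall>i<N. y i = 0)"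
  unfolding vnorm1_def by (subst sum_nonneg_eq_0_iff) auto

lemma vnorm1_mvec_le: "vnorm1 N (mvec N M y) \<le> mnorm1 N M * vnorm1 N y"
proof -
  have "vnorm1 N (mvec N M y) \<le> (\<Sum>i<N. \<Sum>k<N. \<bar>M i k\<bar> * \<bar>y k\<bar>)"
    unfolding vnorm1_def mvec_def
    by (rule sum_mono) (rule order_trans[OF sum_abs], simp add: abs_mult)
  also have "\<dots> = (\<Sum>k<N. (\<Sum>i<N. \<bar>M i k\<bar>) * \<bar>y k\<bar>)"
    by (subst sum.swap) (simp add: sum_distrib_right)
  also have "\<dots> \<le> (\<Sum>k<N. mnorm1 N M * \<bar>y k\<bar>)"
    by (rule sum_mono) (auto intro: mult_right_mono column_sum_le_mnorm1)
  also have "\<dots> = mnorm1 N M * vnorm1 N y" by (simp add: vnorm1_def sum_distrib_left)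
  finally show ?thesis .
qed

lemma vnorm1_mvec_le_dominating:
  assumes "\<forall>i<N. \<forall>j<N. \<bar>M i j\<bar> \<le> \<bar>M' i j\<bar>"
  shows "vnorm1 N (mvec N M y) \<le> mnorm1 N M' * vnorm1 N y"
  using vnorm1_mvec_le mult_right_mono[OF mnorm1_mono[OF assms] vnorm1_nonneg] by (rule order_trans)

text \<open>A matrix with nonpositive off-diagonal entries does not shrink \<open>|y|\<close> by more than its
column sums: in row \<open>i\<close>, multiply by \<open>sgn y\<^sub>i\<close>, which turns the diagonal term into
\<open>K\<^sub>i\<^sub>i |y\<^sub>i|\<close> and can only increase the off-diagonal ones.\<close>
lemma column_sums_le_vnorm1_mvec:
  assumes off: "\<forall>i<N. \<forall>j<N. i \<noteq> j \<longrightarrow> K i j \<le> 0"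
  shows "(\<Sum>j<N. (\<Sum>i<N. K i j) * \<bar>y j\<bar>) \<le> vnorm1 N (mvec N K y)"
proof -
  have row: "(\<Sum>j<N. K i j * \<bar>y j\<bar>) \<le> \<bar>mvec N K y i\<bar>" if i: "i < N" for i
  proof -
    have "K i j * \<bar>y j\<bar> \<le> K i j * (sgn (y i) * y j)" if j: "j < N" for j
    proof (cases "i = j")
      case True thus ?thesis by (simp add: sgn_mult_self_eq abs_sgn mult.commute)
    next
      case False
      have "sgn (y i) * y j \<le> \<bar>y j\<bar>" by (auto simp: sgn_if)
      with False off i j show ?thesis by (simp add: mult_left_mono_neg)
    qed
    hence "(\<Sum>j<N. K i j * \<bar>y j\<bar>) \<le> sgn (y i) * mvec N K y i"
      by (auto simp: mvec_def sum_distrib_left algebra_simps intro: sum_mono)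
    also have "\<dots> \<le> \<bar>mvec N K y i\<bar>" by (auto simp: sgn_if)
    finally show ?thesis .
  qed
  have "(\<Sum>j<N. (\<Sum>i<N. K i j) * \<bar>y j\<bar>) = (\<Sum>i<N. \<Sum>j<N. K i j * \<bar>y j\<bar>)"
    by (subst sum.swap) (simp add: sum_distrib_right)
  also have "\<dots> \<le> vnorm1 N (mvec N K y)"
    unfolding vnorm1_def by (rule sum_mono) (simp add: row)
  finally show ?thesis .
qed

lemma limmat_abs_le_limmat_ones:
  assumes dat: "is_limmat_data N \<beta> \<kappa>"
    and \<alpha>: "\<forall>k\<in>{1..N-1}. 0 \<le> \<alpha> k \<and> \<alpha> k \<le> 1"
    and i: "i < N" and j: "j < N"
  shows "\<bar>limmat N \<beta> \<kappa> \<alpha> i j\<bar> \<le> \<bar>limmat N \<beta> \<kappa> ones i j\<bar>"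
proof -
  have entry: "\<beta> i k \<le> 0 \<and> 0 \<le> \<alpha> (\<kappa> i k) \<and> \<alpha> (\<kappa> i k) \<le> 1" if "k < N" "i \<noteq> k" for k
    using dat \<alpha> that i unfolding is_limmat_data_def by blast
  have off: "\<bar>\<alpha> (\<kappa> i k) * \<beta> i k\<bar> \<le> \<bar>\<beta> i k\<bar>" if "k < N" "i \<noteq> k" for k
    using entry[OF that] by (metis abs_ge_zero abs_mult abs_of_nonneg mult_left_le_one_le)
  have diag: "limmat N \<beta> \<kappa> a i i = (\<Sum>k\<in>{..<N} - {i}. \<bar>a (\<kappa> i k) * \<beta> i k\<bar>)"
    if "\<forall>k\<in>{..<N} - {i}. 0 \<le> a (\<kappa> i k)" for a
    unfolding limmat_def sum_negf[symmetric] using that entry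
    by (auto intro!: sum.cong simp: abs_of_nonpos mult_nonneg_nonpos)
  show ?thesis
  proof (cases "i = j")
    case False thus ?thesis using off[OF j False] by (simp add: limmat_def ones_def)
  next
    case True
    have "\<bar>limmat N \<beta> \<kappa> \<alpha> i j\<bar> = (\<Sum>k\<in>{..<N} - {i}. \<bar>\<alpha> (\<kappa> i k) * \<beta> i k\<bar>)"
      unfolding True[symmetric] using entry by (subst diag) (auto simp: sum_nonneg)
    also have "\<dots> \<le> (\<Sum>k\<in>{..<N} - {i}. \<bar>\<beta> i k\<bar>)" by (rule sum_mono) (simp add: off)
    also have "\<dots> = \<bar>limmat N \<beta> \<kappa> ones i j\<bar>"
      unfolding True[symmetric] by (subst diag) (auto simp: ones_def sum_nonneg)
    finally show ?thesis .
  qed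
qed

lemma implicit_matrix_lower_bound:
  fixes A B B\<^sub>1 :: mat and d y :: vec and c m \<gamma> :: real
  assumes A_off: "\<forall>i<N. \<forall>j<N. i \<noteq> j \<longrightarrow> A i j \<le> 0"
    and d: "\<forall>i<N. 0 \<le> d i" and c: "0 \<le> c"
    and m: "\<forall>j<N. m \<le> d j + c * (\<Sum>i<N. d i * A i j)"
    and B: "\<forall>i<N. \<forall>j<N. \<bar>B i j\<bar> \<le> \<bar>B\<^sub>1 i j\<bar>"
    and cfl: "c * mnorm1 N (mmul N (diagm d) B\<^sub>1) \<le> \<gamma> * m"
  shows "(1 - \<gamma>) * m * vnorm1 N y
    \<le> mnorm1 N (diagm d) * vnorm1 N (mvec N (madd idm (mscale c (msub A B))) y)"
proof -
  define C where "C = madd idm (mscale c (msub A B))"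
  define K where "K = mmul N (diagm d) (madd idm (mscale c A))"
  have K: "K i j = d i * (idm i j + c * A i j)" if "i < N" for i j
    using that by (simp add: K_def mmul_diagm madd_def mscale_def)
  have K_off: "\<forall>i<N. \<forall>j<N. i \<noteq> j \<longrightarrow> K i j \<le> 0"
    using A_off d c by (simp add: K idm_def mult_nonneg_nonpos)
  have K_col: "(\<Sum>i<N. K i j) = d j + c * (\<Sum>i<N. d i * A i j)" if "j < N" for j
    using that by (simp add: K idm_def algebra_simps sum.distrib sum_distrib_left
        if_distrib[of "\<lambda>x. _ * x"] cong: if_cong)
  have split: "mvec N K y i = mvec N (diagm d) (mvec N C y) i + c * mvec N (mmul N (diagm d) B) y i"
    if "i < N" for i
    using that by (simp add: K_def C_def mvec_mmul_diagm mvec_diagm mvec_madd mvec_msub mvec_mscale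
        algebra_simps)
  have DB: "\<forall>i<N. \<forall>j<N. \<bar>mmul N (diagm d) B i j\<bar> \<le> \<bar>mmul N (diagm d) B\<^sub>1 i j\<bar>"
    using B d by (simp add: mmul_diagm abs_mult mult_left_mono)
  have "m * vnorm1 N y \<le> (\<Sum>j<N. (\<Sum>i<N. K i j) * \<bar>y j\<bar>)"
    unfolding vnorm1_def sum_distrib_left using m by (intro sum_mono mult_right_mono) (simp_all add: K_col)
  also have "\<dots> \<le> vnorm1 N (mvec N K y)"
    using K_off by (rule column_sums_le_vnorm1_mvec)
  also have "\<dots> = vnorm1 N (\<lambda>i. mvec N (diagm d) (mvec N C y) i + c * mvec N (mmul N (diagm d) B) y i)"
    by (rule vnorm1_cong) (rule split)
  also have "\<dots> \<le> vnorm1 N (mvec N (diagm d) (mvec N C y)) + c * vnorm1 N (mvec N (mmul N (diagm d) B) y)"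
    using vnorm1_add_le[of N _ "\<lambda>i. c * _ i"] c by (simp add: vnorm1_scale)
  also have "\<dots> \<le> mnorm1 N (diagm d) * vnorm1 N (mvec N C y) + c * (mnorm1 N (mmul N (diagm d) B\<^sub>1) * vnorm1 N y)"
    using c by (intro add_mono mult_left_mono vnorm1_mvec_le vnorm1_mvec_le_dominating DB)
  also have "\<dots> \<le> mnorm1 N (diagm d) * vnorm1 N (mvec N C y) + \<gamma> * m * vnorm1 N y"
    using mult_right_mono[OF cfl vnorm1_nonneg] by (simp add: mult.assoc)
  finally show ?thesis by (simp add: C_def algebra_simps)
qed

lemma explicit_matrix_upper_bound:
  fixes A B B\<^sub>1 :: mat and y :: vec and c :: real
  assumes c: "0 \<le> c" and B: "\<forall>i<N. \<forall>j<N. \<bar>B i j\<bar> \<le> \<bar>B\<^sub>1 i j\<bar>"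
  shows "vnorm1 N (mvec N (msub idm (mscale c (msub A B))) y)
    \<le> (mnorm1 N (msub idm (mscale c A)) + c * mnorm1 N B\<^sub>1) * vnorm1 N y"
proof -
  have "vnorm1 N (mvec N (msub idm (mscale c (msub A B))) y)
      = vnorm1 N (\<lambda>i. mvec N (msub idm (mscale c A)) y i + c * mvec N B y i)"
    by (rule arg_cong[of _ _ "vnorm1 N"]) (simp add: fun_eq_iff mvec_msub mvec_mscale algebra_simps)
  also have "\<dots> \<le> vnorm1 N (mvec N (msub idm (mscale c A)) y) + c * vnorm1 N (mvec N B y)"
    using vnorm1_add_le[of N _ "\<lambda>i. c * _ i"] c by (simp add: vnorm1_scale)
  also have "\<dots> \<le> mnorm1 N (msub idm (mscale c A)) * vnorm1 N y + c * (mnorm1 N B\<^sub>1 * vnorm1 N y)"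
    using c by (intro add_mono mult_left_mono vnorm1_mvec_le vnorm1_mvec_le_dominating B)
  finally show ?thesis by (simp add: algebra_simps)
qed

lemma invertible_mat_if_mvec_injective:
  assumes inj: "\<forall>y. (\<forall>i<N. mvec N C y i = 0) \<longrightarrow> (\<forall>i<N. y i = 0)"
  shows "invertible_mat N C"
proof -
  define A :: "real Matrix.mat" where "A = Matrix.mat N N (\<lambda>(i,j). C i j)"
  have Ac: "A \<in> carrier_mat N N" by (simp add: A_def)
  have "det A \<noteq> 0"
  proof
    assume "det A = 0"
    then obtain v where v: "v \<in> carrier_vec N" "v \<noteq> 0\<^sub>v N" "A *\<^sub>v v = 0\<^sub>v N"
      using det_0_iff_vec_prod_zero[OF Ac] by blast
    have "\<forall>i<N. mvec N C (\<lambda>k. v $ k) i = 0"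
    proof (intro allI impI)
      fix i assume i: "i < N"
      have "(A *\<^sub>v v) $ i = 0" using v(3) i by simp
      moreover have "(A *\<^sub>v v) $ i = mvec N C (\<lambda>k. v $ k) i"
        using i v(1) by (simp add: A_def mvec_def scalar_prod_def row_def atLeast0LessThan)
      ultimately show "mvec N C (\<lambda>k. v $ k) i = 0" by simp
    qed
    with inj have "\<forall>i<N. v $ i = 0" by blast
    hence "v = 0\<^sub>v N" using v(1) by (intro eq_vecI) auto
    with v(2) show False by simp
  qed
  from det_non_zero_imp_unit[OF Ac this, of "()"]
  obtain B where B: "B \<in> carrier_mat N N" "B * A = 1\<^sub>m N" "A * B = 1\<^sub>m N"
    unfolding Units_def by (auto simp: ring_mat_simps)
  show ?thesis unfolding invertible_mat_def
  proof (intro exI[of _ "\<lambda>i j. B $$ (i,j)"] allI impI conjI)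
    fix i j assume i: "i < N" and j: "j < N"
    have "(A * B) $$ (i,j) = mmul N C (\<lambda>i j. B $$ (i, j)) i j"
      using i j B(1) by (simp add: A_def mmul_def scalar_prod_def row_def col_def atLeast0LessThan)
    thus "mmul N C (\<lambda>i j. B $$ (i, j)) i j = idm i j" using B(3) i j by (simp add: idm_def)
    have "(B * A) $$ (i,j) = mmul N (\<lambda>i j. B $$ (i, j)) C i j"
      using i j B(1) by (simp add: A_def mmul_def scalar_prod_def row_def col_def atLeast0LessThan)
    thus "mmul N (\<lambda>i j. B $$ (i, j)) C i j = idm i j" using B(2) i j by (simp add: idm_def)
  qed
qed

lemma invertible_mat_if_lower_bound:
  assumes k: "0 < k" and bound: "\<And>y. k * vnorm1 N y \<le> L * vnorm1 N (mvec N C y)"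
  shows "invertible_mat N C"
proof (rule invertible_mat_if_mvec_injective, rule allI, rule impI)
  fix y assume "\<forall>i<N. mvec N C y i = 0"
  hence "k * vnorm1 N y \<le> 0" using bound[of y] by (simp add: vnorm1_eq_0_iff[THEN iffD2])
  hence "vnorm1 N y = 0" using k vnorm1_nonneg[of N y] by (simp add: mult_le_0_iff)
  thus "\<forall>i<N. y i = 0" by (simp add: vnorm1_eq_0_iff)
qed

theorem mainTheorem6:
  fixes N :: nat and An An1 :: mat and d :: vec
    and \<beta>n \<beta>n1 :: mat and \<kappa>n \<kappa>n1 :: "nat \<Rightarrow> nat \<Rightarrow> nat"
    and \<sigma> \<gamma> \<Delta>t :: real and s :: vec
  assumes N: "N \<ge> 1"
    and MAn: "condM N An" and MAn1: "condM N An1"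
    and dpos: "\<forall>i<N. d i > 0"
    and dA: "\<forall>j<N. (\<Sum>i<N. d i * An1 i j) \<ge> 0"
    and Bn: "is_limmat_data N \<beta>n \<kappa>n" and Bn1: "is_limmat_data N \<beta>n1 \<kappa>n1"
    and dB: "\<forall>\<alpha>. \<forall>j<N. (\<Sum>i<N. d i * limmat N \<beta>n1 \<kappa>n1 \<alpha> i j) = 0"
    and sig: "0 \<le> \<sigma>" "\<sigma> \<le> 1"
    and gam: "0 < \<gamma>" "\<gamma> < 1"
    and s_def: "\<forall>j. s j = d j + \<Delta>t * \<sigma> * (\<Sum>i<N. d i * An1 i j)"
    and dt: "\<Delta>t > 0"
    and cfl: "\<Delta>t * \<sigma> * mnorm1 N (mmul N (diagm d) (limmat N \<beta>n1 \<kappa>n1 ones))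
              \<le> \<gamma> * Min (s ` {..<N})"
  shows "\<forall>\<alpha>n \<alpha>n1 :: vec. (\<forall>k\<in>{1..N-1}. 0 \<le> \<alpha>n k \<and> \<alpha>n k \<le> 1) \<longrightarrow>
           (\<forall>k\<in>{1..N-1}. 0 \<le> \<alpha>n1 k \<and> \<alpha>n1 k \<le> 1) \<longrightarrow>
           invertible_mat N (madd idm (mscale (\<Delta>t * \<sigma>) (msub An1 (limmat N \<beta>n1 \<kappa>n1 \<alpha>n1)))) \<and>
           (\<forall>yn g y1 :: vec.
              (\<forall>i<N. mvec N (madd idm (mscale (\<Delta>t * \<sigma>) (msub An1 (limmat N \<beta>n1 \<kappa>n1 \<alpha>n1)))) y1 i
                 = mvec N (msub idm (mscale (\<Delta>t * (1 - \<sigma>)) (msub An (limmat N \<beta>n \<kappa>n \<alpha>n)))) yn i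
                   + \<Delta>t * g i) \<longrightarrow>
              vnorm1 N y1 \<le>
                (mnorm1 N (diagm d) / ((1 - \<gamma>) * Min (s ` {..<N}))) *
                ((mnorm1 N (msub idm (mscale (\<Delta>t * (1 - \<sigma>)) An))
                   + \<Delta>t * (1 - \<sigma>) * mnorm1 N (limmat N \<beta>n \<kappa>n ones)) * vnorm1 N yn
                 + \<Delta>t * vnorm1 N g))"
proof (intro allI impI conjI)
  fix \<alpha>n \<alpha>n1 :: vec
  assume \<alpha>n: "\<forall>k\<in>{1..N-1}. 0 \<le> \<alpha>n k \<and> \<alpha>n k \<le> 1"
     and \<alpha>n1: "\<forall>k\<in>{1..N-1}. 0 \<le> \<alpha>n1 k \<and> \<alpha>n1 k \<le> 1"
  define C where "C = madd idm (mscale (\<Delta>t * \<sigma>) (msub An1 (limmat N \<beta>n1 \<kappa>n1 \<alpha>n1)))"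
  define m where "m = Min (s ` {..<N})"
  have s_pos: "0 < s j" if "j < N" for j
    using s_def dpos dA dt sig that by (simp add: add_pos_nonneg)
  have m_pos: "0 < m"
    using N s_pos unfolding m_def by (subst Min_gr_iff) (auto simp: lessThan_empty_iff)
  have m_le: "\<forall>j<N. m \<le> s j"
    unfolding m_def by simp
  have lower: "(1 - \<gamma>) * m * vnorm1 N y \<le> mnorm1 N (diagm d) * vnorm1 N (mvec N C y)" for y
    unfolding C_def using MAn1 dpos dt sig m_le s_def limmat_abs_le_limmat_ones[OF Bn1 \<alpha>n1] cfl
    by (intro implicit_matrix_lower_bound[where B\<^sub>1 = "limmat N \<beta>n1 \<kappa>n1 ones"])
      (auto simp: condM_def m_def)
  have gap: "0 < (1 - \<gamma>) * m" using gam m_pos by simp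
  from gap lower show "invertible_mat N C" unfolding C_def by (rule invertible_mat_if_lower_bound)
  fix yn g y1 :: vec
  assume scheme: "\<forall>i<N. mvec N C y1 i
    = mvec N (msub idm (mscale (\<Delta>t * (1 - \<sigma>)) (msub An (limmat N \<beta>n \<kappa>n \<alpha>n)))) yn i + \<Delta>t * g i"
  define M\<^sub>1 where "M\<^sub>1 = mnorm1 N (msub idm (mscale (\<Delta>t * (1 - \<sigma>)) An))
    + \<Delta>t * (1 - \<sigma>) * mnorm1 N (limmat N \<beta>n \<kappa>n ones)"
  have "vnorm1 N (mvec N C y1) \<le> vnorm1 N (mvec N (msub idm (mscale (\<Delta>t * (1 - \<sigma>))
      (msub An (limmat N \<beta>n \<kappa>n \<alpha>n)))) yn) + \<Delta>t * vnorm1 N g"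
    using vnorm1_add_le[of N _ "\<lambda>i. \<Delta>t * g i"] dt
    by (simp add: vnorm1_cong[OF scheme[rule_format]] vnorm1_scale)
  also have "\<dots> \<le> M\<^sub>1 * vnorm1 N yn + \<Delta>t * vnorm1 N g"
    unfolding M\<^sub>1_def using dt sig limmat_abs_le_limmat_ones[OF Bn \<alpha>n]
    by (intro add_right_mono explicit_matrix_upper_bound) auto
  finally have "(1 - \<gamma>) * m * vnorm1 N y1 \<le> mnorm1 N (diagm d) * (M\<^sub>1 * vnorm1 N yn + \<Delta>t * vnorm1 N g)"
    using lower[of y1] mnorm1_nonneg[OF N] by (meson mult_left_mono order_trans)
  with gap show "vnorm1 N y1 \<le> mnorm1 N (diagm d) / ((1 - \<gamma>) * Min (s ` {..<N}))
    * (M\<^sub>1 * vnorm1 N yn + \<Delta>t * vnorm1 N g)"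
    unfolding m_def by (simp add: pos_le_divide_eq mult.commute mult.left_commute)
qed

end
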